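(* Let $G=(Q\cup S,E)$ be a split graph, where $Q$ is a clique, $S$ is a stable set, $Q\cap S=\emptyset$, and $Q$ is a maximal clique of $G$ (not contained in any larger clique). Let $T\subseteq Q$ be a non-empty set such that the degrees in $G$ of the vertices of $T$ are pairwise different. Then $\eta(G)\leq |Q|-|T|+1$.
   Context: All graphs are finite, simple and undirected. A graph is split if its vertex set can be partitioned into a clique and a stable set. For a vertex $v$, $N(v)$ is its set of neighbours and $d(v)=|N(v)|$ its degree. For a positive integer $k$, $[k]=\{1,\dots,k\}$. For a labeling $f:V(G)\to[k]$ and $S'\subseteq V(G)$, $f(S')=\sum_{u\in S'}f(u)$. A labeling $f:V(G)\to[k]$ is an additive $k$-coloring if $f(N(u))\neq f(N(v))$ for every edge $(u,v)$ of $G$. The additive chromatic number $\eta(G)$ is the least $k$ for which $G$ has an additive $k$-coloring. *)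

theory Defs
  imports Main
begin

definition simple_graph :: "'a set \<Rightarrow> ('a \<Rightarrow> 'a \<Rightarrow> bool) \<Rightarrow> bool" where
  "simple_graph V E \<longleftrightarrow> finite V \<and> (\<forall>u v. E u v \<longrightarrow> u \<in> V \<and> v \<in> V)
     \<and> (\<forall>u v. E u v \<longrightarrow> E v u) \<and> (\<forall>v. \<not> E v v)"

definition nbhd :: "'a set \<Rightarrow> ('a \<Rightarrow> 'a \<Rightarrow> bool) \<Rightarrow> 'a \<Rightarrow> 'a set" where
  "nbhd V E v = {u \<in> V. E v u}"

definition degree :: "'a set \<Rightarrow> ('a \<Rightarrow> 'a \<Rightarrow> bool) \<Rightarrow> 'a \<Rightarrow> nat" where
  "degree V E v = card (nbhd V E v)"

definition is_clique :: "'a set \<Rightarrow> ('a \<Rightarrow> 'a \<Rightarrow> bool) \<Rightarrow> 'a set \<Rightarrow> bool" where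
  "is_clique V E Q \<longleftrightarrow> Q \<subseteq> V \<and> (\<forall>u\<in>Q. \<forall>v\<in>Q. u \<noteq> v \<longrightarrow> E u v)"

definition is_stable :: "'a set \<Rightarrow> ('a \<Rightarrow> 'a \<Rightarrow> bool) \<Rightarrow> 'a set \<Rightarrow> bool" where
  "is_stable V E S \<longleftrightarrow> S \<subseteq> V \<and> (\<forall>u\<in>S. \<forall>v\<in>S. \<not> E u v)"

definition maximal_clique :: "'a set \<Rightarrow> ('a \<Rightarrow> 'a \<Rightarrow> bool) \<Rightarrow> 'a set \<Rightarrow> bool" where
  "maximal_clique V E Q \<longleftrightarrow> is_clique V E Q \<and>
     (\<forall>Q'. is_clique V E Q' \<and> Q \<subseteq> Q' \<longrightarrow> Q' = Q)"

definition additive_coloring :: "'a set \<Rightarrow> ('a \<Rightarrow> 'a \<Rightarrow> bool) \<Rightarrow> nat \<Rightarrow> ('a \<Rightarrow> nat) \<Rightarrow> bool" where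
  "additive_coloring V E k f \<longleftrightarrow> k \<ge> 1 \<and> (\<forall>v\<in>V. f v \<in> {1..k}) \<and>
     (\<forall>u v. E u v \<longrightarrow> sum f (nbhd V E u) \<noteq> sum f (nbhd V E v))"

definition additive_chromatic_number :: "'a set \<Rightarrow> ('a \<Rightarrow> 'a \<Rightarrow> bool) \<Rightarrow> nat" where
  "additive_chromatic_number V E = (LEAST k. \<exists>f. additive_coloring V E k f)"

end

theory Submission
  imports Defs
begin

text \<open>Give every vertex of the stable set S the label k and label the clique Q so that vertices
  of equal degree get distinct labels in [k]. For q \<in> Q the neighbourhood sum is
  f(Q) - f(q) + k |N(q) \<inter> S|, and |N(q) \<inter> S| = d(q) + 1 - |Q|. Two clique vertices of equal
  degree are therefore separated by their labels; for different degrees the term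
  k |N(q) \<inter> S| differs by at least k, which the labels in [k] cannot compensate. A vertex s \<in> S
  misses some clique vertex by maximality of Q, so its sum is at most f(Q) - 1, while every
  neighbour q \<in> Q of s has sum at least f(Q) - k + k = f(Q). Since T meets each degree class
  of Q at most once, the classes have at most |Q| - |T| + 1 elements, so k = |Q| - |T| + 1
  labels suffice.\<close>

lemma additive_chromatic_number_le:
  assumes "additive_coloring V E k f"
  shows "additive_chromatic_number V E \<le> k"
  unfolding additive_chromatic_number_def using assms by (blast intro: Least_le)

lemma card_fibre_le_card_diff_Suc:
  assumes "finite A" and "T \<subseteq> A" and "inj_on g T"
  shows "card {x \<in> A. g x = d} \<le> card A - card T + 1"
proof -
  define C where "C = {x \<in> A. g x = d}"
  have "finite C" using assms(1) C_def by simp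
  have "card (C \<inter> T) \<le> 1"
    using assms(3) \<open>finite C\<close> by (auto simp: C_def inj_on_def card_le_Suc0_iff_eq)
  moreover have "card (C - T) \<le> card A - card T"
    using card_mono[of "A - T" "C - T"] card_Diff_subset[of T A] assms
    by (auto simp: C_def finite_subset)
  moreover have "card C = card (C - T) + card (C \<inter> T)"
    using \<open>finite C\<close> card_Diff_subset_Int[of C T] card_mono[of C "C \<inter> T"] by auto
  ultimately show ?thesis unfolding C_def by linarith
qed

lemma exists_labeling_inj_on_fibres:
  assumes "finite A"
  obtains h :: "'a \<Rightarrow> nat"
  where "\<And>x. x \<in> A \<Longrightarrow> h x \<in> {1..card {y \<in> A. g y = g x}}"
    and "\<And>x y. x \<in> A \<Longrightarrow> y \<in> A \<Longrightarrow> g x = g y \<Longrightarrow> h x = h y \<Longrightarrow> x = y"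
proof -
  define C where "C d = {y \<in> A. g y = d}" for d
  have "\<exists>h. bij_betw h (C d) {1..card (C d)}" for d
    using assms by (intro finite_same_card_bij) (auto simp: C_def)
  then obtain H where H: "\<And>d. bij_betw (H d) (C d) {1..card (C d)}"
    by metis
  show thesis
  proof
    show "(\<lambda>x. H (g x) x) x \<in> {1..card {y \<in> A. g y = g x}}" if "x \<in> A" for x
      using bij_betwE[OF H[of "g x"]] that by (auto simp: C_def)
    show "x = y" if "x \<in> A" "y \<in> A" "g x = g y" "H (g x) x = H (g y) y" for x y
      using bij_betw_imp_inj_on[OF H[of "g x"]] that by (auto simp: C_def inj_on_def)
  qed
qed

locale split_graph =
  fixes V Q S :: "'a set" and E :: "'a \<Rightarrow> 'a \<Rightarrow> bool"
  assumes simple: "simple_graph V E"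
    and partition: "V = Q \<union> S" "Q \<inter> S = {}"
    and clique: "is_clique V E Q"
    and stable: "is_stable V E S"
begin

lemma finite_Q: "finite Q" and finite_S: "finite S"
  using simple partition by (auto simp: simple_graph_def)

lemma nbhd_clique_vertex:
  assumes "q \<in> Q"
  shows "nbhd V E q = (Q - {q}) \<union> (nbhd V E q \<inter> S)"
  using assms simple partition clique by (auto simp: nbhd_def simple_graph_def is_clique_def)

lemma nbhd_stable_vertex:
  assumes "s \<in> S"
  shows "nbhd V E s \<subseteq> Q"
  using assms partition stable by (auto simp: nbhd_def is_stable_def)

lemma degree_clique_vertex:
  assumes "q \<in> Q"
  shows "degree V E q + 1 = card Q + card (nbhd V E q \<inter> S)"
proof -
  have "degree V E q = card (Q - {q}) + card (nbhd V E q \<inter> S)"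
    unfolding degree_def
    by (subst nbhd_clique_vertex[OF assms], rule card_Un_disjoint)
       (use finite_Q finite_S partition in auto)
  then show ?thesis
    using assms finite_Q card_Suc_Diff1 by fastforce
qed

lemma sum_nbhd_clique_vertex:
  assumes "q \<in> Q" and "\<And>s. s \<in> S \<Longrightarrow> f s = k"
  shows "sum f (nbhd V E q) + f q = sum f Q + k * card (nbhd V E q \<inter> S)"
proof -
  have "sum f (nbhd V E q) = sum f (Q - {q}) + sum f (nbhd V E q \<inter> S)"
    by (subst nbhd_clique_vertex[OF assms(1)], rule sum.union_disjoint)
       (use finite_Q finite_S partition in auto)
  moreover have "sum f (nbhd V E q \<inter> S) = k * card (nbhd V E q \<inter> S)"
    using assms(2) by (simp add: mult.commute)
  moreover have "sum f (Q - {q}) + f q = sum f Q"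
    using sum.remove[OF finite_Q assms(1), of f] by simp
  ultimately show ?thesis by simp
qed

lemma stable_vertex_misses_clique:
  assumes "maximal_clique V E Q" and "s \<in> S"
  obtains q where "q \<in> Q" and "\<not> E s q"
proof (rule ccontr)
  assume "\<not> thesis"
  with that have "\<forall>q\<in>Q. E s q" by blast
  then have "is_clique V E (insert s Q)"
    using clique simple partition assms(2) by (auto simp: is_clique_def simple_graph_def)
  then have "insert s Q = Q"
    using assms(1) by (auto simp: maximal_clique_def)
  then show False using assms(2) partition by auto
qed

context
  fixes k :: nat and f :: "'a \<Rightarrow> nat"
  assumes label_S: "\<And>s. s \<in> S \<Longrightarrow> f s = k"
    and label_Q: "\<And>q. q \<in> Q \<Longrightarrow> f q \<in> {1..k}"
begin

lemma sum_nbhd_stable_lt_clique: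
  assumes "maximal_clique V E Q" and "q \<in> Q" and "s \<in> S" and "E q s"
  shows "sum f (nbhd V E s) < sum f (nbhd V E q)"
proof -
  obtain q0 where q0: "q0 \<in> Q" "\<not> E s q0"
    using stable_vertex_misses_clique[OF assms(1,3)] .
  have "q0 \<notin> nbhd V E s" using q0(2) by (simp add: nbhd_def)
  then have "sum f (nbhd V E s) + f q0 = sum f (insert q0 (nbhd V E s))"
    using finite_subset[OF nbhd_stable_vertex[OF assms(3)] finite_Q] by simp
  also have "\<dots> \<le> sum f Q"
    using finite_Q q0(1) nbhd_stable_vertex[OF assms(3)] by (intro sum_mono2) auto
  finally have "sum f (nbhd V E s) + f q0 \<le> sum f Q" .
  moreover have "nbhd V E q \<inter> S \<noteq> {}"
    using assms(3,4) simple partition by (auto simp: nbhd_def)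
  then have "k \<le> k * card (nbhd V E q \<inter> S)"
    using finite_S by (simp add: Suc_le_eq card_gt_0_iff)
  moreover have "f q \<le> k" "1 \<le> f q0"
    using label_Q assms(2) q0(1) by auto
  ultimately show ?thesis
    using sum_nbhd_clique_vertex[of q f k, OF assms(2) label_S] by linarith
qed

lemma sum_nbhd_clique_vertices_distinct:
  assumes inj_degree: "\<And>u v. u \<in> Q \<Longrightarrow> v \<in> Q \<Longrightarrow> degree V E u = degree V E v \<Longrightarrow> f u = f v
      \<Longrightarrow> u = v"
    and "u \<in> Q" and "v \<in> Q" and "u \<noteq> v"
  shows "sum f (nbhd V E u) \<noteq> sum f (nbhd V E v)"
proof
  define a b where "a = card (nbhd V E u \<inter> S)" and "b = card (nbhd V E v \<inter> S)"
  assume "sum f (nbhd V E u) = sum f (nbhd V E v)"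
  then have key: "k * a + f v = k * b + f u"
    using sum_nbhd_clique_vertex[of u f k, OF assms(2) label_S]
      sum_nbhd_clique_vertex[of v f k, OF assms(3) label_S]
    unfolding a_def b_def by linarith
  have bounds: "f u \<in> {1..k}" "f v \<in> {1..k}" using label_Q assms(2,3) by auto
  consider "a = b" | "a < b" | "b < a" by linarith
  then show False
  proof cases
    case 1
    then have "degree V E u = degree V E v" and "f u = f v"
      using degree_clique_vertex[OF assms(2)] degree_clique_vertex[OF assms(3)] key
      unfolding a_def b_def by simp_all
    then show False using inj_degree assms(2-4) by blast
  next
    case 2
    then have "k * (a + 1) \<le> k * b" by (intro mult_le_mono2) simp
    then show False using key bounds by (simp add: algebra_simps)
  next
    case 3
    then have "k * (b + 1) \<le> k * a" by (intro mult_le_mono2) simp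
    then show False using key bounds by (simp add: algebra_simps)
  qed
qed

lemma additive_coloring_of_degree_labeling:
  assumes "maximal_clique V E Q" and "1 \<le> k"
    and "\<And>u v. u \<in> Q \<Longrightarrow> v \<in> Q \<Longrightarrow> degree V E u = degree V E v \<Longrightarrow> f u = f v \<Longrightarrow> u = v"
  shows "additive_coloring V E k f"
  unfolding additive_coloring_def
proof (intro conjI ballI allI impI)
  show "1 \<le> k" by (fact assms(2))
  show "f v \<in> {1..k}" if "v \<in> V" for v
    using that partition label_Q label_S assms(2) by auto
  fix u v assume e: "E u v"
  then have uv: "u \<in> Q \<union> S" "v \<in> Q \<union> S" "E v u" "u \<noteq> v"
    using simple partition by (auto simp: simple_graph_def)
  have "\<not> (u \<in> S \<and> v \<in> S)" using e stable by (auto simp: is_stable_def)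
  then consider "u \<in> Q" "v \<in> Q" | "u \<in> Q" "v \<in> S" | "u \<in> S" "v \<in> Q"
    using uv by blast
  then show "sum f (nbhd V E u) \<noteq> sum f (nbhd V E v)"
  proof cases
    case 1
    then show ?thesis using sum_nbhd_clique_vertices_distinct assms(3) uv(4) by blast
  next
    case 2
    then show ?thesis using sum_nbhd_stable_lt_clique[OF assms(1) _ _ e] by fastforce
  next
    case 3
    then show ?thesis using sum_nbhd_stable_lt_clique[OF assms(1) _ _ uv(3)] by fastforce
  qed
qed

end

end

theorem mainTheorem9:
  fixes V Q S T :: "'a set" and E :: "'a \<Rightarrow> 'a \<Rightarrow> bool"
  assumes "simple_graph V E"
    and "V = Q \<union> S" and "Q \<inter> S = {}"
    and "is_clique V E Q" and "is_stable V E S"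
    and "maximal_clique V E Q"
    and "T \<subseteq> Q" and "T \<noteq> {}"
    and "inj_on (degree V E) T"
  shows "additive_chromatic_number V E \<le> card Q - card T + 1"
proof -
  interpret split_graph V Q S E using assms(1-5) by unfold_locales
  define k where "k = card Q - card T + 1"
  obtain h where h_range: "\<And>q. q \<in> Q \<Longrightarrow> h q \<in> {1..card {p \<in> Q. degree V E p = degree V E q}}"
    and h_inj: "\<And>u v. u \<in> Q \<Longrightarrow> v \<in> Q \<Longrightarrow> degree V E u = degree V E v \<Longrightarrow> h u = h v \<Longrightarrow> u = v"
    using exists_labeling_inj_on_fibres[OF finite_Q, of "degree V E"] by blast
  define f where "f v = (if v \<in> S then k else h v)" for v
  have f_Q: "f q = h q" if "q \<in> Q" for q
    using that assms(3) by (auto simp: f_def)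
  have "additive_coloring V E k f"
  proof (rule additive_coloring_of_degree_labeling)
    show "f s = k" if "s \<in> S" for s
      using that by (simp add: f_def)
    show "f q \<in> {1..k}" if "q \<in> Q" for q
      using h_range[OF that] card_fibre_le_card_diff_Suc[OF finite_Q assms(7,9), of "degree V E q"]
      unfolding f_Q[OF that] k_def by auto
    show "u = v" if "u \<in> Q" "v \<in> Q" "degree V E u = degree V E v" "f u = f v" for u v
      using h_inj that f_Q by metis
  qed (simp_all add: assms(6) k_def)
  then show ?thesis
    unfolding k_def by (rule additive_chromatic_number_le)
qed

end
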